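(* Let $c\in\mathbb{N}$, $c\ge1$, and let $F=(n_F)_{n\ge0}$ with $0_F=1$ and $n_F=c\,n$ for $n\ge1$. Then for all $1\le a\le b$, the layer $\langle\Phi_a\to\Phi_b\rangle$ of the cobweb poset of $F$ admits a tiling by blocks of type $\sigma P_{b-a+1}$.
   Context: Notation: $n_F\equiv F_n$. The cobweb poset of $F$ has, for each $s\ge1$, a level $\Phi_s$ consisting of $s_F$ distinct vertices (levels pairwise disjoint), plus a root level $\Phi_0$ with one vertex; for $x\in\Phi_i$, $y\in\Phi_j$ one has $x<y$ iff $i<j$. For $1\le a\le b$, the layer $\langle\Phi_a\to\Phi_b\rangle$ is the subposet on $\Phi_a\cup\dots\cup\Phi_b$; it has $m=b-a+1$ levels and its maximal chains form the set $\Phi_a\times\dots\times\Phi_b$. For a permutation $\sigma$ of $\{1,\dots,m\}$, a block of type $\sigma P_m$ in this layer is the subposet induced on $V_a\cup\dots\cup V_b$ where $V_{a-1+i}\subseteq\Phi_{a-1+i}$ and $|V_{a-1+i}|=\sigma(i)_F$ for $i=1,\dots,m$; its maximal chains form the set $V_a\times\dots\times V_b$. A tiling of the layer is a finite family of such blocks ($\sigma$ may vary from block to block) whose sets $V_a\times\dots\times V_b$ partition $\Phi_a\times\dots\times\Phi_b$ (pairwise max-disjoint and covering all maximal chains). *)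

theory Defs
  imports Main "HOL-Library.FuncSet" "HOL-Combinatorics.Permutations"
begin

definition cF :: "nat \<Rightarrow> nat \<Rightarrow> nat" where
  "cF c n = (if n = 0 then 1 else c * n)"

text \<open>Level \<Phi>_s of the cobweb poset of F is modelled by the vertex set {0..<F s}
  (tagged implicitly by the level index s, so levels are pairwise disjoint).
  A maximal chain of the layer from \<Phi>_a to \<Phi>_b is an element of
  \<Phi>_a \<times> ... \<times> \<Phi>_b, i.e. an extensional function on {a..b}.\<close>
definition layer_chains :: "(nat \<Rightarrow> nat) \<Rightarrow> nat \<Rightarrow> nat \<Rightarrow> (nat \<Rightarrow> nat) set" where
  "layer_chains F a b = PiE {a..b} (\<lambda>s. {..<F s})"

definition is_block :: "(nat \<Rightarrow> nat) \<Rightarrow> nat \<Rightarrow> nat \<Rightarrow> (nat \<Rightarrow> nat) \<Rightarrow> (nat \<Rightarrow> nat set) \<Rightarrow> bool" where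
  "is_block F a b \<sigma> V \<longleftrightarrow>
     \<sigma> permutes {1..b-a+1} \<and>
     (\<forall>i\<in>{1..b-a+1}. V (a-1+i) \<subseteq> {..<F (a-1+i)} \<and> card (V (a-1+i)) = F (\<sigma> i))"

definition block_chains :: "nat \<Rightarrow> nat \<Rightarrow> (nat \<Rightarrow> nat set) \<Rightarrow> (nat \<Rightarrow> nat) set" where
  "block_chains a b V = PiE {a..b} V"

definition is_tiling :: "(nat \<Rightarrow> nat) \<Rightarrow> nat \<Rightarrow> nat \<Rightarrow> ((nat \<Rightarrow> nat) \<times> (nat \<Rightarrow> nat set)) list \<Rightarrow> bool" where
  "is_tiling F a b Bs \<longleftrightarrow>
     (\<forall>B\<in>set Bs. is_block F a b (fst B) (snd B)) \<and>
     (\<forall>i<length Bs. \<forall>j<length Bs. i \<noteq> j \<longrightarrow>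
        block_chains a b (snd (Bs!i)) \<inter> block_chains a b (snd (Bs!j)) = {}) \<and>
     (\<Union>B\<in>set Bs. block_chains a b (snd B)) = layer_chains F a b"

end

theory Submission
  imports Defs
begin

(* Write X p for level p (a set of c * p vertices) and view a block as
   a "box" Pi_E P V, where V p \<subseteq> X p has c * \<tau> p elements for a bijection
   \<tau> : P \<rightarrow> {1..m}.  We prove, more generally, that Pi_E P X can be tiled by such
   boxes whenever the level sizes are c * d p for a bijection d : P \<rightarrow> {a..<a+m}.
   Induction on a + m: let p0 be the largest level (size c(a+m-1)) and split
   X p0 = Y \<union> Z with |Y| = c m, |Z| = c (a-1).  Chains through Y are tiled by
   extending a tiling of the m-1 remaining levels (sizes a..a+m-2) with the
   coordinate Y, which gets the new largest type m; chains through Z form a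
   product with level sizes c(a-1), ..., c(a+m-2), tiled by induction on a. *)

definition box_tiling :: "'a set \<Rightarrow> ('a \<Rightarrow> 'b set) set \<Rightarrow> ('a \<Rightarrow> 'b) set \<Rightarrow> bool" where
  "box_tiling P \<V> S \<longleftrightarrow>
     finite \<V> \<and> pairwise (\<lambda>V W. PiE P V \<inter> PiE P W = {}) \<V> \<and> \<Union> (PiE P ` \<V>) = S"

lemma PiE_iff_fun_upd:
  assumes "p0 \<in> P"
  shows "f \<in> PiE P V \<longleftrightarrow> f p0 \<in> V p0 \<and> f(p0 := undefined) \<in> PiE (P - {p0}) V"
  using assms unfolding PiE_iff extensional_def by auto

lemma PiE_fun_upd_iff:
  assumes "p0 \<in> P"
  shows "f \<in> PiE P (X(p0 := W)) \<longleftrightarrow> f p0 \<in> W \<and> f(p0 := undefined) \<in> PiE (P - {p0}) X"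
proof -
  have "PiE (P - {p0}) (X(p0 := W)) = PiE (P - {p0}) X" by (intro PiE_cong) auto
  then show ?thesis using PiE_iff_fun_upd[OF assms, of f "X(p0 := W)"] by simp
qed

lemma box_tiling_Un:
  assumes "box_tiling P \<V>1 S1" and "box_tiling P \<V>2 S2" and "S1 \<inter> S2 = {}"
  shows "box_tiling P (\<V>1 \<union> \<V>2) (S1 \<union> S2)"
proof -
  have "PiE P V \<inter> PiE P W = {}" if "V \<in> \<V>1" "W \<in> \<V>2" for V W
    using assms that unfolding box_tiling_def by blast
  then have "pairwise (\<lambda>V W. PiE P V \<inter> PiE P W = {}) (\<V>1 \<union> \<V>2)"
    using assms unfolding box_tiling_def pairwise_def by (metis Int_commute Un_iff)
  then show ?thesis using assms unfolding box_tiling_def by auto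
qed

lemma box_tiling_extend:
  assumes p0: "p0 \<in> P" and tiling: "box_tiling (P - {p0}) \<V> (PiE (P - {p0}) X)"
  shows "box_tiling P ((\<lambda>V. V(p0 := Y)) ` \<V>) (PiE P (X(p0 := Y)))"
proof -
  note mem = PiE_fun_upd_iff[OF p0]
  have disjoint: "PiE P (V(p0 := Y)) \<inter> PiE P (W(p0 := Y)) = {}"
    if "PiE (P - {p0}) V \<inter> PiE (P - {p0}) W = {}" for V W
    using that by (auto simp: mem disjoint_iff)
  have "pairwise (\<lambda>V W. PiE P V \<inter> PiE P W = {}) ((\<lambda>V. V(p0 := Y)) ` \<V>)"
  proof (rule pairwise_imageI)
    fix V W assume "V \<in> \<V>" "W \<in> \<V>" "V \<noteq> W"
    then have "PiE (P - {p0}) V \<inter> PiE (P - {p0}) W = {}"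
      using tiling unfolding box_tiling_def pairwise_def by blast
    then show "PiE P (V(p0 := Y)) \<inter> PiE P (W(p0 := Y)) = {}" by (rule disjoint)
  qed
  moreover have "\<Union> (PiE P ` (\<lambda>V. V(p0 := Y)) ` \<V>) = PiE P (X(p0 := Y))"
  proof (rule set_eqI)
    fix f
    have "f \<in> \<Union> (PiE P ` (\<lambda>V. V(p0 := Y)) ` \<V>) \<longleftrightarrow>
          f p0 \<in> Y \<and> f(p0 := undefined) \<in> \<Union> (PiE (P - {p0}) ` \<V>)"
      by (auto simp: mem)
    also have "\<dots> \<longleftrightarrow> f \<in> PiE P (X(p0 := Y))"
      using tiling unfolding box_tiling_def by (simp add: mem)
    finally show "f \<in> \<Union> (PiE P ` (\<lambda>V. V(p0 := Y)) ` \<V>) \<longleftrightarrow> f \<in> PiE P (X(p0 := Y))" .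
  qed
  ultimately show ?thesis using tiling unfolding box_tiling_def by simp
qed

lemma PiE_split_coordinate:
  assumes "p0 \<in> P" and "X p0 = Y \<union> Z" and "Y \<inter> Z = {}"
  shows "PiE P X = PiE P (X(p0 := Y)) \<union> PiE P (X(p0 := Z))"
    and "PiE P (X(p0 := Y)) \<inter> PiE P (X(p0 := Z)) = {}"
proof -
  note mem = PiE_fun_upd_iff[OF assms(1), of _ X]
  show "PiE P X = PiE P (X(p0 := Y)) \<union> PiE P (X(p0 := Z))"
    by (rule set_eqI)
      (simp only: PiE_iff_fun_upd[OF assms(1), of _ X] mem assms(2) Un_iff conj_disj_distribR)
  show "PiE P (X(p0 := Y)) \<inter> PiE P (X(p0 := Z)) = {}"
    using assms(3) by (auto simp: disjoint_iff mem)
qed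

text \<open>A box inside Pi_E P X whose sides have sizes c * \<tau> p for a bijection
  \<tau> from P onto {1..m}: the abstract form of a block of type \<sigma>P_m.\<close>
definition scaled_block :: "nat \<Rightarrow> nat \<Rightarrow> 'a set \<Rightarrow> ('a \<Rightarrow> 'b set) \<Rightarrow> ('a \<Rightarrow> 'b set) \<Rightarrow> bool" where
  "scaled_block c m P X V \<longleftrightarrow>
     (\<forall>p\<in>P. V p \<subseteq> X p) \<and> (\<exists>\<tau>. bij_betw \<tau> P {1..m} \<and> (\<forall>p\<in>P. card (V p) = c * \<tau> p))"

lemma scaled_block_mono:
  "scaled_block c m P X V \<Longrightarrow> (\<And>p. p \<in> P \<Longrightarrow> X p \<subseteq> X' p) \<Longrightarrow> scaled_block c m P X' V"
  unfolding scaled_block_def by blast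

lemma scaled_block_extend:
  assumes "scaled_block c (m - 1) (P - {p0}) X V" and "p0 \<in> P" and "0 < m"
    and "Y \<subseteq> X p0" and "card Y = c * m"
  shows "scaled_block c m P X (V(p0 := Y))"
proof -
  obtain \<tau> where \<tau>: "bij_betw \<tau> (P - {p0}) {1..m - 1}" "\<forall>p\<in>P - {p0}. card (V p) = c * \<tau> p"
    using assms(1) unfolding scaled_block_def by blast
  have "bij_betw (\<tau>(p0 := m)) (P - {p0}) {1..m - 1}"
    using \<tau>(1) by (rule bij_betw_cong[THEN iffD1, rotated]) auto
  then have "bij_betw (\<tau>(p0 := m)) ((P - {p0}) \<union> {p0}) ({1..m - 1} \<union> {m})"
    by (rule bij_betw_combine) auto
  moreover have "(P - {p0}) \<union> {p0} = P" and "{1..m - 1} \<union> {m} = {1..m}"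
    using assms(2,3) by auto
  ultimately have "bij_betw (\<tau>(p0 := m)) P {1..m}" by simp
  then show ?thesis
    using assms \<tau>(2) unfolding scaled_block_def by auto
qed

lemma scaled_tiling_combine:
  assumes p0: "p0 \<in> P" and "0 < m" and Y: "Y \<subseteq> X p0" "card Y = c * m"
    and \<V>1: "box_tiling (P - {p0}) \<V>1 (PiE (P - {p0}) X)"
      "\<forall>V\<in>\<V>1. scaled_block c (m - 1) (P - {p0}) X V"
    and \<V>2: "box_tiling P \<V>2 (PiE P (X(p0 := X p0 - Y)))"
      "\<forall>V\<in>\<V>2. scaled_block c m P (X(p0 := X p0 - Y)) V"
  shows "\<exists>\<V>. box_tiling P \<V> (PiE P X) \<and> (\<forall>V\<in>\<V>. scaled_block c m P X V)"
proof -
  have split: "PiE P X = PiE P (X(p0 := Y)) \<union> PiE P (X(p0 := X p0 - Y))"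
    "PiE P (X(p0 := Y)) \<inter> PiE P (X(p0 := X p0 - Y)) = {}"
    using PiE_split_coordinate[OF p0, of X Y "X p0 - Y"] Y(1) by auto
  have "box_tiling P ((\<lambda>V. V(p0 := Y)) ` \<V>1 \<union> \<V>2) (PiE P X)"
    unfolding split(1) using box_tiling_Un[OF box_tiling_extend[OF p0 \<V>1(1)] \<V>2(1) split(2)] .
  moreover have "scaled_block c m P X (V(p0 := Y))" if "V \<in> \<V>1" for V
    using that \<V>1(2) assms(2) Y p0 scaled_block_extend[of c m P p0 X V Y] by simp
  moreover have "scaled_block c m P X V" if "V \<in> \<V>2" for V
    using that \<V>2(2) scaled_block_mono[of c m P "X(p0 := X p0 - Y)" V X] by auto
  ultimately show ?thesis by blast
qed

theorem scaled_tiling_exists: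
  assumes "bij_betw d P {a..<a + m}" and "\<forall>p\<in>P. finite (X p) \<and> card (X p) = c * d p"
  shows "\<exists>\<V>. box_tiling P \<V> (PiE P X) \<and> (\<forall>V\<in>\<V>. scaled_block c m P X V)"
  using assms
proof (induction "a + m" arbitrary: a m P d X rule: less_induct)
  case less
  consider "m = 0" | "a = 0" "0 < m" | "0 < a" "0 < m" by blast
  then show ?case
  proof cases
    case 1
    text \<open>No levels: the product has one (empty) chain, covered by the empty box.\<close>
    then have "P = {}" using less.prems(1) by (simp add: bij_betw_def)
    then show ?thesis using 1
      by (intro exI[of _ "{\<lambda>_. {}}"]) (simp add: box_tiling_def scaled_block_def bij_betw_def)
  next
    case 2
    text \<open>A level of size c * 0 is empty, so there is nothing to tile.\<close>
    then have "0 \<in> d ` P" using less.prems(1) by (simp add: bij_betw_def)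
    then obtain p where "p \<in> P" "d p = 0" by (metis imageE)
    then have "X p = {}" using less.prems(2) by auto
    then have "PiE P X = {}" using \<open>p \<in> P\<close> by (auto simp: PiE_eq_empty_iff)
    then show ?thesis by (intro exI[of _ "{}"]) (simp add: box_tiling_def)
  next
    case 3
    text \<open>Split the largest level p0, of size c * (a+m-1), into parts of sizes c * m and c * (a-1).\<close>
    have "a + m - 1 \<in> d ` P" using less.prems(1) 3 by (simp add: bij_betw_def)
    then obtain p0 where p0: "p0 \<in> P" "d p0 = a + m - 1" by (metis imageE)
    have "c * m \<le> c * (a + m - 1)" using 3 by (intro mult_le_mono2) simp
    then have "c * m \<le> card (X p0)" using less.prems(2) p0 by simp
    then obtain Y where Y: "Y \<subseteq> X p0" "card Y = c * m" by (meson obtain_subset_with_card_n)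
    define Z where "Z = X p0 - Y"
    have fin: "finite (X p0)" using less.prems(2) p0(1) by blast
    have "card (X p0) = c * m + c * (a - 1)"
      using less.prems(2) p0 3 by (cases a) (simp_all add: algebra_simps)
    then have "card Z = c * (a - 1)"
      using Y fin unfolding Z_def by (simp add: card_Diff_subset finite_subset)
    text \<open>Chains through Y: the remaining levels have sizes c * a, ..., c * (a+m-2).\<close>
    have "bij_betw d (P - {p0}) ({a..<a + m} - {d p0})"
      using less.prems(1) p0(1)
      by (intro bij_betw_DiffI[of d P _ "{p0}" "{d p0}"]) (auto simp: bij_betw_def)
    moreover have "{a..<a + m} - {d p0} = {a..<a + (m - 1)}" using p0(2) 3 by auto
    ultimately have bij_rest: "bij_betw d (P - {p0}) {a..<a + (m - 1)}" by simp
    have "a + (m - 1) < a + m" using 3 by simp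
    then obtain \<V>1 where \<V>1: "box_tiling (P - {p0}) \<V>1 (PiE (P - {p0}) X)"
      "\<forall>V\<in>\<V>1. scaled_block c (m - 1) (P - {p0}) X V"
      using less.hyps[OF _ bij_rest] less.prems(2) by blast
    text \<open>Chains through Z: the level sizes become c * (a-1), ..., c * (a+m-2).\<close>
    have "bij_betw (d(p0 := a - 1)) (P - {p0}) {a..<a + (m - 1)}"
      using bij_rest by (rule bij_betw_cong[THEN iffD1, rotated]) auto
    then have "bij_betw (d(p0 := a - 1)) ((P - {p0}) \<union> {p0}) ({a..<a + (m - 1)} \<union> {a - 1})"
      by (rule bij_betw_combine) (use 3 in auto)
    moreover have "(P - {p0}) \<union> {p0} = P" "{a..<a + (m - 1)} \<union> {a - 1} = {a - 1..<a - 1 + m}"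
      using p0(1) 3 by auto
    ultimately have bij_lowered: "bij_betw (d(p0 := a - 1)) P {a - 1..<a - 1 + m}" by simp
    have "\<forall>p\<in>P. finite ((X(p0 := Z)) p) \<and> card ((X(p0 := Z)) p) = c * (d(p0 := a - 1)) p"
      using less.prems(2) \<open>card Z = _\<close> fin unfolding Z_def by simp
    moreover have "a - 1 + m < a + m" using 3 by simp
    ultimately obtain \<V>2 where \<V>2: "box_tiling P \<V>2 (PiE P (X(p0 := Z)))"
      "\<forall>V\<in>\<V>2. scaled_block c m P (X(p0 := Z)) V"
      using less.hyps[OF _ bij_lowered] by blast
    show ?thesis
      using scaled_tiling_combine[OF p0(1) _ Y \<V>1] \<V>2 3 unfolding Z_def by blast
  qed
qed

lemma is_tiling_of_box_tiling:
  assumes tiling: "box_tiling {a..b} \<V> (layer_chains F a b)"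
    and blocks: "\<forall>V\<in>\<V>. \<exists>\<sigma>. is_block F a b \<sigma> V"
  shows "\<exists>Bs. is_tiling F a b Bs"
proof -
  obtain xs where xs: "set xs = \<V>" "distinct xs"
    using tiling finite_distinct_list unfolding box_tiling_def by blast
  define Bs where "Bs = map (\<lambda>V. (SOME \<sigma>. is_block F a b \<sigma> V, V)) xs"
  have "is_block F a b (SOME \<sigma>. is_block F a b \<sigma> V) V" if "V \<in> \<V>" for V
    using blocks that by (blast intro: someI_ex[of "\<lambda>\<sigma>. is_block F a b \<sigma> V"])
  then have "\<forall>B\<in>set Bs. is_block F a b (fst B) (snd B)"
    using xs(1) unfolding Bs_def by auto
  moreover have "block_chains a b (snd (Bs ! i)) \<inter> block_chains a b (snd (Bs ! j)) = {}"
    if "i < length Bs" "j < length Bs" "i \<noteq> j" for i j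
  proof -
    have "xs ! i \<noteq> xs ! j" "xs ! i \<in> \<V>" "xs ! j \<in> \<V>"
      using that xs unfolding Bs_def by (auto simp: nth_eq_iff_index_eq)
    then show ?thesis
      using that tiling unfolding box_tiling_def pairwise_def Bs_def block_chains_def by simp
  qed
  moreover have "(\<Union>B\<in>set Bs. block_chains a b (snd B)) = layer_chains F a b"
    using tiling xs(1) unfolding box_tiling_def Bs_def block_chains_def by auto
  ultimately show ?thesis unfolding is_tiling_def by blast
qed

text \<open>A scaled block of type m = b - a + 1 on the levels a..b of F = cF c is a block
  of type \<sigma>P_m, where \<sigma> i is the type of level a - 1 + i.\<close>
lemma scaled_block_is_block:
  assumes "1 \<le> a" and "a \<le> b"
    and block: "scaled_block c (b - a + 1) {a..b} (\<lambda>s. {..<cF c s}) V"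
  shows "\<exists>\<sigma>. is_block (cF c) a b \<sigma> V"
proof -
  define m where "m = b - a + 1"
  obtain \<tau> where \<tau>: "bij_betw \<tau> {a..b} {1..m}" "\<forall>p\<in>{a..b}. card (V p) = c * \<tau> p"
    using block unfolding scaled_block_def m_def by blast
  define \<sigma> where "\<sigma> i = (if i \<in> {1..m} then \<tau> (a - 1 + i) else i)" for i
  have shift: "bij_betw (\<lambda>i. a - 1 + i) {1..m} {a..b}"
    unfolding m_def using assms(1,2)
    by (intro bij_betw_byWitness[where f' = "\<lambda>j. j - (a - 1)"]) auto
  have "bij_betw (\<tau> \<circ> (\<lambda>i. a - 1 + i)) {1..m} {1..m}"
    using bij_betw_trans[OF shift \<tau>(1)] .
  then have "bij_betw \<sigma> {1..m} {1..m}"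
    by (rule bij_betw_cong[THEN iffD1, rotated]) (simp add: \<sigma>_def)
  then have "\<sigma> permutes {1..m}"
    by (rule bij_imp_permutes) (auto simp: \<sigma>_def)
  moreover have "V (a - 1 + i) \<subseteq> {..<cF c (a - 1 + i)} \<and> card (V (a - 1 + i)) = cF c (\<sigma> i)"
    if i: "i \<in> {1..m}" for i
  proof -
    have level: "a - 1 + i \<in> {a..b}" using i assms(1,2) unfolding m_def by auto
    then have "\<sigma> i \<in> {1..m}" using i \<tau>(1) unfolding \<sigma>_def bij_betw_def by auto
    then have "cF c (\<sigma> i) = c * \<tau> (a - 1 + i)" using i unfolding \<sigma>_def cF_def by auto
    then show ?thesis using level block \<tau>(2) unfolding scaled_block_def by auto
  qed
  ultimately show ?thesis unfolding is_block_def m_def by blast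
qed

theorem mainTheorem6:
  fixes c a b :: nat
  assumes "c \<ge> 1" and "1 \<le> a" and "a \<le> b"
  shows "\<exists>Bs. is_tiling (cF c) a b Bs"
proof -
  define m where "m = b - a + 1"
  define X where "X s = {..<cF c s}" for s
  have "{a..<a + m} = {a..b}" using assms(3) unfolding m_def by auto
  then have levels: "bij_betw id {a..b} {a..<a + m}" by simp
  have sizes: "\<forall>p\<in>{a..b}. finite (X p) \<and> card (X p) = c * id p"
    using assms(2) unfolding X_def cF_def by auto
  obtain \<V> where \<V>: "box_tiling {a..b} \<V> (PiE {a..b} X)" "\<forall>V\<in>\<V>. scaled_block c m {a..b} X V"
    using scaled_tiling_exists[OF levels sizes] by blast
  show ?thesis
  proof (rule is_tiling_of_box_tiling)
    show "box_tiling {a..b} \<V> (layer_chains (cF c) a b)"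
      using \<V>(1) unfolding layer_chains_def X_def .
    show "\<forall>V\<in>\<V>. \<exists>\<sigma>. is_block (cF c) a b \<sigma> V"
      using \<V>(2) scaled_block_is_block[OF assms(2,3)] unfolding m_def X_def by blast
  qed
qed

end
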